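(* Let $E$ be a nonzero real Banach space and $g\colon E^*\times E^{**}\to\,]{-}\infty,\infty]$ be proper, convex and lower semicontinuous with $g(y^*,y^{**})\ge\langle y^*,y^{**}\rangle$ for all $(y^*,y^{**})\in E^*\times E^{**}$. Let $(z^*,z^{**})\in E^*\times E^{**}$ satisfy $g(z^*,z^{**})=\langle z^*,z^{**}\rangle$. Then $g^*(z^{**},\widehat{z^*})=\langle z^*,z^{**}\rangle$.
   Context: $\widehat{z^*}\in E^{***}$ is the canonical image of $z^*$. $(E^*\times E^{**})^*$ is identified with $E^{**}\times E^{***}$ via $\langle (y^*,y^{**}),(x^{**},x^{***})\rangle=\langle y^*,x^{**}\rangle+\langle y^{**},x^{***}\rangle$, and $g^*$ is the Fenchel conjugate of $g$ with respect to this pairing. *)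

theory Defs
  imports "HOL-Analysis.Analysis" "HOL-Library.Extended_Real"
begin

(* Duals: E* = 'a =>L real, E** = ('a =>L real) =>L real, E*** = E** =>L real.
   The pairing of y* in E* with y** in E** is  blinfun_apply y** y*. *)

definition proper_fun :: "('b \<Rightarrow> ereal) \<Rightarrow> bool" where
  "proper_fun g \<longleftrightarrow> (\<forall>x. g x \<noteq> -\<infinity>) \<and> (\<exists>x. g x \<noteq> \<infinity>)"

definition convex_fun :: "('b::real_vector \<Rightarrow> ereal) \<Rightarrow> bool" where
  "convex_fun g \<longleftrightarrow> convex {(x, r::real). g x \<le> ereal r}"

definition lsc_fun :: "('b::topological_space \<Rightarrow> ereal) \<Rightarrow> bool" where
  "lsc_fun g \<longleftrightarrow> (\<forall>x. g x \<le> Liminf (at x) g)"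

definition canon_emb :: "('a::real_normed_vector \<Rightarrow>\<^sub>L real) \<Rightarrow> ((('a \<Rightarrow>\<^sub>L real) \<Rightarrow>\<^sub>L real) \<Rightarrow>\<^sub>L real)" where
  "canon_emb z = Blinfun (\<lambda>x. blinfun_apply x z)"

definition fenchel_conj ::
  "(('a::real_normed_vector \<Rightarrow>\<^sub>L real) \<times> (('a \<Rightarrow>\<^sub>L real) \<Rightarrow>\<^sub>L real) \<Rightarrow> ereal)
   \<Rightarrow> (('a \<Rightarrow>\<^sub>L real) \<Rightarrow>\<^sub>L real) \<times> ((('a \<Rightarrow>\<^sub>L real) \<Rightarrow>\<^sub>L real) \<Rightarrow>\<^sub>L real) \<Rightarrow> ereal" where
  "fenchel_conj g = (\<lambda>(x2, x3). SUP p. ereal (blinfun_apply x2 (fst p) + blinfun_apply x3 (snd p)) - g p)"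

end

theory Submission
  imports Defs
begin

text \<open>Write \<open>q(y\<^sup>*, y\<^sup>*\<^sup>*) = \<langle>y\<^sup>*, y\<^sup>*\<^sup>*\<rangle>\<close>. Along the segment from \<open>z = (z\<^sup>*, z\<^sup>*\<^sup>*)\<close>
  to any \<open>p\<close> with \<open>g p < \<infinity>\<close>, the quadratic form \<open>q\<close> stays below the convex function \<open>g\<close>,
  and both agree at \<open>z\<close>. Comparing first-order terms at \<open>z\<close> yields
  \<open>\<langle>z\<^sup>*, p\<^sup>*\<^sup>*\<rangle> + \<langle>p\<^sup>*, z\<^sup>*\<^sup>*\<rangle> - g p \<le> q z\<close>, i.e. the supremum defining
  \<open>g\<^sup>*(z\<^sup>*\<^sup>*, \<widehat>z\<^sup>*)\<close> is at most \<open>q z\<close>; it is attained at \<open>p = z\<close>.\<close>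

lemma nonpos_if_le_linear_near_zero:
  fixes d K :: real
  assumes "\<And>t. 0 < t \<Longrightarrow> t \<le> 1 \<Longrightarrow> d \<le> t * K"
  shows "d \<le> 0"
proof (rule ccontr)
  assume "\<not> d \<le> 0"
  define t where "t = min 1 (d / (2 * (\<bar>K\<bar> + 1)))"
  have t: "0 < t" "t \<le> 1" using \<open>\<not> d \<le> 0\<close> by (auto simp: t_def)
  have "t \<le> d / (2 * (\<bar>K\<bar> + 1))" by (simp add: t_def)
  hence "t * (\<bar>K\<bar> + 1) \<le> d / 2" by (simp add: field_simps)
  moreover have "t * K \<le> t * (\<bar>K\<bar> + 1)" using t by (intro mult_left_mono) auto
  ultimately show False using assms[OF t] \<open>\<not> d \<le> 0\<close> by linarith
qed

lemma convex_fun_le_combination: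
  assumes "convex_fun g" "g x \<le> ereal r" "g y \<le> ereal s" "0 \<le> t" "t \<le> 1"
  shows "g ((1 - t) *\<^sub>R x + t *\<^sub>R y) \<le> ereal ((1 - t) * r + t * s)"
  using convexD[of "{(x, r). g x \<le> ereal r}" "(x, r)" "(y, s)" "1 - t" t] assms
  by (simp add: convex_fun_def)

lemma blinfun_apply_segment:
  fixes x u :: "'a::real_normed_vector" and f h :: "'a \<Rightarrow>\<^sub>L real"
  shows "blinfun_apply ((1 - t) *\<^sub>R f + t *\<^sub>R h) ((1 - t) *\<^sub>R x + t *\<^sub>R u)
    = (1 - t)\<^sup>2 * f x + (1 - t) * t * (f u + h x) + t\<^sup>2 * h u"
  by (simp only: blinfun.add_left blinfun.add_right blinfun.scaleR_left
      blinfun.scaleR_right scaleR_blinfun.rep_eq) (simp add: algebra_simps power2_eq_square)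

lemma canon_emb_apply:
  fixes z :: "'a::real_normed_vector \<Rightarrow>\<^sub>L real" and v :: "('a \<Rightarrow>\<^sub>L real) \<Rightarrow>\<^sub>L real"
  shows "blinfun_apply (canon_emb z) v = blinfun_apply v z"
proof -
  have "bounded_linear (\<lambda>x :: ('a \<Rightarrow>\<^sub>L real) \<Rightarrow>\<^sub>L real. blinfun_apply x z)"
    by (rule bounded_bilinear.bounded_linear_left[OF bounded_bilinear_blinfun_apply])
  then show ?thesis
    unfolding canon_emb_def by (simp add: bounded_linear_Blinfun_apply)
qed

lemma pairing_minus_le_at_touching_point:
  fixes g :: "('a::real_normed_vector \<Rightarrow>\<^sub>L real) \<times> (('a \<Rightarrow>\<^sub>L real) \<Rightarrow>\<^sub>L real) \<Rightarrow> ereal"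
  assumes cvx: "convex_fun g"
    and above: "\<And>y1 y2. g (y1, y2) \<ge> ereal (blinfun_apply y2 y1)"
    and touch: "g (z1, z2) = ereal (blinfun_apply z2 z1)"
  shows "ereal (blinfun_apply z2 u + blinfun_apply v z1) - g (u, v) \<le> ereal (blinfun_apply z2 z1)"
proof (cases "g (u, v)")
  case (real r)
  define a where "a = blinfun_apply z2 u + blinfun_apply v z1"
  define c where "c = blinfun_apply z2 z1"
  have "a - c - r \<le> 0"
  proof (rule nonpos_if_le_linear_near_zero[where K = "a - c - blinfun_apply v u"])
    fix t :: real assume t: "0 < t" "t \<le> 1"
    have "g ((1 - t) *\<^sub>R (z1, z2) + t *\<^sub>R (u, v)) \<le> ereal ((1 - t) * c + t * r)"
      using t by (intro convex_fun_le_combination[OF cvx]) (simp_all add: touch real c_def)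
    with above have "blinfun_apply ((1 - t) *\<^sub>R z2 + t *\<^sub>R v) ((1 - t) *\<^sub>R z1 + t *\<^sub>R u)
        \<le> (1 - t) * c + t * r"
      by (metis (no_types) order_trans ereal_less_eq(3) scaleR_Pair add_Pair)
    hence "t * (a - c - r) \<le> t * (t * (a - c - blinfun_apply v u))"
      unfolding blinfun_apply_segment a_def c_def by (simp add: algebra_simps power2_eq_square)
    thus "a - c - r \<le> t * (a - c - blinfun_apply v u)" using t by simp
  qed
  thus ?thesis by (simp add: real a_def c_def)
next
  case MInf
  with above[of v u] show ?thesis by simp
qed simp

theorem lemma7p3:
  fixes g :: "('a::banach \<Rightarrow>\<^sub>L real) \<times> (('a \<Rightarrow>\<^sub>L real) \<Rightarrow>\<^sub>L real) \<Rightarrow> ereal"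
    and z1 :: "'a \<Rightarrow>\<^sub>L real" and z2 :: "('a \<Rightarrow>\<^sub>L real) \<Rightarrow>\<^sub>L real"
  assumes "\<exists>x::'a. x \<noteq> 0"
    and "proper_fun g" and "convex_fun g" and "lsc_fun g"
    and "\<And>y1 y2. g (y1, y2) \<ge> ereal (blinfun_apply y2 y1)"
    and "g (z1, z2) = ereal (blinfun_apply z2 z1)"
  shows "fenchel_conj g (z2, canon_emb z1) = ereal (blinfun_apply z2 z1)"
proof -
  let ?f = "\<lambda>p. ereal (blinfun_apply z2 (fst p) + blinfun_apply (snd p) z1) - g p"
  have conj: "fenchel_conj g (z2, canon_emb z1) = (SUP p. ?f p)"
    by (simp add: fenchel_conj_def canon_emb_apply)
  have "(SUP p. ?f p) \<le> ereal (blinfun_apply z2 z1)"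
    using pairing_minus_le_at_touching_point[OF assms(3,5,6)]
    by (intro SUP_least) (metis prod.collapse)
  moreover have "?f (z1, z2) \<le> (SUP p. ?f p)"
    by (rule SUP_upper) simp
  ultimately show ?thesis
    using assms(6) by (simp add: conj)
qed

end
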